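(* For even $n$ and an alphabet $\Sigma$ with $|\Sigma|\ge n$, $\mathsf{maxPI}(\mathrm{Col})=\Theta(\sqrt{n})$.
   Context: The collision problem $\mathrm{Col}$ is the partial function on $S\subseteq\Sigma^n$ where $S$ consists of the positive inputs, $x=x_1\cdots x_n$ with all $x_i$ distinct ($\mathrm{Col}(x)=1$), and the negative inputs, $x$ such that for each $i$ there is exactly one $j\neq i$ with $x_i=x_j$ ($\mathrm{Col}(x)=0$). For $f:S\to\{0,1\}$, $S\subseteq\Sigma^n$, with $p=\{p_x:x\in S\}$ ranging over families of probability distributions on $[n]$, $$\mathsf{maxPI}(f)=\min_{p}\ \max_{x,y\in S:\ f(x)\neq f(y)} \frac{1}{\max_{i:\,x_i\neq y_i}\sqrt{p_x(i)p_y(i)}}.$$ *)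

theory Defs
  imports "HOL-Analysis.Analysis" "HOL-Library.Extended_Real"
begin

text \<open>Inputs in Sigma^n are lists of length n; positions are 0..<n (standing for [n]).\<close>

definition Col_pos :: "nat \<Rightarrow> 'a set \<Rightarrow> 'a list set" where
  "Col_pos n \<Sigma> = {x. length x = n \<and> set x \<subseteq> \<Sigma> \<and> distinct x}"

definition Col_neg :: "nat \<Rightarrow> 'a set \<Rightarrow> 'a list set" where
  "Col_neg n \<Sigma> = {x. length x = n \<and> set x \<subseteq> \<Sigma> \<and>
      (\<forall>i<n. \<exists>!j. j < n \<and> j \<noteq> i \<and> x ! i = x ! j)}"

definition Col_dom :: "nat \<Rightarrow> 'a set \<Rightarrow> 'a list set" where
  "Col_dom n \<Sigma> = Col_pos n \<Sigma> \<union> Col_neg n \<Sigma>"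

definition Col :: "'a list \<Rightarrow> bool" where
  "Col x = distinct x"

definition prob_families :: "nat \<Rightarrow> 'a list set \<Rightarrow> ('a list \<Rightarrow> nat \<Rightarrow> real) set" where
  "prob_families n S = {p. \<forall>x\<in>S. (\<forall>i<n. 0 \<le> p x i) \<and> (\<Sum>i<n. p x i) = 1}"

definition pi_term :: "nat \<Rightarrow> ('a list \<Rightarrow> nat \<Rightarrow> real) \<Rightarrow> 'a list \<Rightarrow> 'a list \<Rightarrow> ereal" where
  "pi_term n p x y =
     (let m = Max {sqrt (p x i * p y i) | i. i < n \<and> x ! i \<noteq> y ! i}
      in if m = 0 then \<infinity> else ereal (1 / m))"

definition maxPI :: "nat \<Rightarrow> 'a list set \<Rightarrow> ('a list \<Rightarrow> bool) \<Rightarrow> ereal" where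
  "maxPI n S f =
     (INF p \<in> prob_families n S.
        SUP xy \<in> {(x, y). x \<in> S \<and> y \<in> S \<and> f x \<noteq> f y}. pi_term n p (fst xy) (snd xy))"

end

theory Submission
  imports Defs
begin

text \<open>Upper bound: let \<open>p\<^sub>x\<close> be uniform on a positive input, and put weight 1/2 on position 0 and
  on a position colliding with it on a negative input. A positive input differs from a negative
  one at one of these two positions, so every term is at most \<open>\<surd>(2n)\<close>.

  Lower bound: given any family \<open>p\<close> and a positive input \<open>x\<close>, at most \<open>n/2\<close> positions carry
  weight \<open>p\<^sub>x(i) > 2/n\<close>. Match \<open>n/2\<close> of the light positions bijectively with the remaining
  positions and copy \<open>x\<close> along the matching: the result is a negative input \<open>y\<close> differing from
  \<open>x\<close> only at light positions, so the term for \<open>(x, y)\<close> is at least \<open>\<surd>(n/2)\<close>.\<close>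

definition maxPI_of :: "nat \<Rightarrow> 'a list set \<Rightarrow> ('a list \<Rightarrow> bool) \<Rightarrow> ('a list \<Rightarrow> nat \<Rightarrow> real) \<Rightarrow> ereal" where
  "maxPI_of n S f p = (SUP xy \<in> {(x, y). x \<in> S \<and> y \<in> S \<and> f x \<noteq> f y}. pi_term n p (fst xy) (snd xy))"

lemma maxPI_eq_INF_maxPI_of: "maxPI n S f = (INF p \<in> prob_families n S. maxPI_of n S f p)"
  by (simp add: maxPI_def maxPI_of_def)

lemma pi_term_le_maxPI_of:
  assumes "x \<in> S" "y \<in> S" "f x \<noteq> f y"
  shows "pi_term n p x y \<le> maxPI_of n S f p"
  unfolding maxPI_of_def using assms by (force intro: SUP_upper2)

lemma maxPI_of_le:
  assumes "\<And>x y. x \<in> S \<Longrightarrow> y \<in> S \<Longrightarrow> f x \<noteq> f y \<Longrightarrow> pi_term n p x y \<le> B"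
  shows "maxPI_of n S f p \<le> B"
  unfolding maxPI_of_def using assms by (auto intro: SUP_least)

lemma prob_families_bounds:
  assumes "p \<in> prob_families n S" "x \<in> S" "i < n"
  shows "0 \<le> p x i" "p x i \<le> 1"
proof -
  have nonneg: "\<forall>j<n. 0 \<le> p x j" and "(\<Sum>j<n. p x j) = 1"
    using assms by (auto simp: prob_families_def)
  moreover have "p x i \<le> (\<Sum>j<n. p x j)"
    using nonneg assms(3) by (intro member_le_sum) auto
  ultimately show "0 \<le> p x i" "p x i \<le> 1"
    using assms(3) by auto
qed

lemma pi_term_commute: "pi_term n p x y = pi_term n p y x"
proof -
  have "{sqrt (p x i * p y i) | i. i < n \<and> x ! i \<noteq> y ! i}
      = {sqrt (p y i * p x i) | i. i < n \<and> y ! i \<noteq> x ! i}"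
    by (simp add: mult.commute eq_commute)
  then show ?thesis unfolding pi_term_def by metis
qed

lemma pi_term_lower_bound:
  assumes "0 < b" and "\<exists>i<n. x ! i \<noteq> y ! i"
    and "\<And>i. i < n \<Longrightarrow> x ! i \<noteq> y ! i \<Longrightarrow> 0 \<le> p x i * p y i \<and> p x i * p y i \<le> b"
  shows "ereal (1 / sqrt b) \<le> pi_term n p x y"
proof -
  let ?A = "{sqrt (p x i * p y i) | i. i < n \<and> x ! i \<noteq> y ! i}"
  have "?A \<noteq> {}" "finite ?A" using assms(2) by auto
  moreover have "\<forall>a \<in> ?A. 0 \<le> a \<and> a \<le> sqrt b" using assms(3) by auto
  ultimately have "0 \<le> Max ?A" "Max ?A \<le> sqrt b"
    by (meson Max_in Max_le_iff)+
  then show ?thesis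
    using assms(1) by (auto simp: pi_term_def Let_def frac_le)
qed

lemma pi_term_upper_bound:
  assumes "i < n" "x ! i \<noteq> y ! i" "0 < b" "b \<le> p x i * p y i"
  shows "pi_term n p x y \<le> ereal (1 / sqrt b)"
proof -
  let ?A = "{sqrt (p x i * p y i) | i. i < n \<and> x ! i \<noteq> y ! i}"
  have "sqrt (p x i * p y i) \<in> ?A" using assms by blast
  moreover have "finite ?A" by simp
  ultimately have "sqrt b \<le> Max ?A" using assms(4) by (meson Max_ge order_trans real_sqrt_le_iff)
  then show ?thesis
    using assms(3) by (auto simp: pi_term_def Let_def frac_le)
qed

lemma Col_neg_not_distinct:
  assumes "x \<in> Col_neg n \<Sigma>" "0 < n"
  shows "\<not> distinct x"
proof -
  obtain j where "j < n" "j \<noteq> 0" "x ! 0 = x ! j" "length x = n"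
    using assms unfolding Col_neg_def by blast
  then show ?thesis using assms(2) by (metis nth_eq_iff_index_eq)
qed

lemma obtain_Col_pos:
  assumes "n \<le> card \<Sigma>"
  obtains x where "x \<in> Col_pos n \<Sigma>"
proof -
  obtain A where "A \<subseteq> \<Sigma>" "card A = n" "finite A"
    using assms by (meson obtain_subset_with_card_n)
  moreover obtain x where "set x = A" "distinct x"
    using \<open>finite A\<close> finite_distinct_list by blast
  ultimately have "x \<in> Col_pos n \<Sigma>"
    by (auto simp: Col_pos_def distinct_card)
  then show thesis ..
qed

lemma card_gt_mult_le_sum:
  fixes f :: "'a \<Rightarrow> real"
  assumes "finite A" "\<And>i. i \<in> A \<Longrightarrow> 0 \<le> f i"
  shows "real (card {i \<in> A. c < f i}) * c \<le> sum f A"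
proof -
  have "real (card {i \<in> A. c < f i}) * c = (\<Sum>i \<in> {i \<in> A. c < f i}. c)"
    by simp
  also have "\<dots> \<le> (\<Sum>i \<in> {i \<in> A. c < f i}. f i)"
    by (rule sum_mono) simp
  also have "\<dots> \<le> sum f A"
    using assms by (intro sum_mono2) auto
  finally show ?thesis .
qed

lemma obtain_half_matching:
  assumes "even n" "L\<^sub>0 \<subseteq> {..<n}" "n div 2 \<le> card L\<^sub>0"
  obtains L g where "L \<subseteq> L\<^sub>0" "bij_betw g L ({..<n} - L)"
proof -
  obtain L where L: "L \<subseteq> L\<^sub>0" "card L = n div 2" "finite L"
    using assms(3) by (meson obtain_subset_with_card_n)
  have "L \<subseteq> {..<n}"
    using L assms by blast
  then have "card ({..<n} - L) = n - n div 2"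
    using L by (simp add: card_Diff_subset)
  also have "\<dots> = n div 2"
    using \<open>even n\<close> by presburger
  finally have "card ({..<n} - L) = card L"
    using L by simp
  then obtain g where "bij_betw g L ({..<n} - L)"
    using L finite_same_card_bij by (metis finite_Diff finite_lessThan)
  with L show thesis using that by blast
qed

definition collide_along :: "'a list \<Rightarrow> nat set \<Rightarrow> (nat \<Rightarrow> nat) \<Rightarrow> 'a list" where
  "collide_along x L g = map (\<lambda>i. x ! (if i \<in> L then g i else i)) [0..<length x]"

lemma length_collide_along [simp]: "length (collide_along x L g) = length x"
  by (simp add: collide_along_def)

lemma nth_collide_along_notin:
  "i < length x \<Longrightarrow> i \<notin> L \<Longrightarrow> collide_along x L g ! i = x ! i"
  by (simp add: collide_along_def)

lemma collide_along_Col_neg: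
  assumes x: "x \<in> Col_pos n \<Sigma>" and L: "L \<subseteq> {..<n}" and g: "bij_betw g L ({..<n} - L)"
  shows "collide_along x L g \<in> Col_neg n \<Sigma>"
proof -
  define h where "h i = (if i \<in> L then g i else i)" for i
  define y where "y = collide_along x L g"
  have x_props: "length x = n" "distinct x" "set x \<subseteq> \<Sigma>"
    using x by (auto simp: Col_pos_def)
  have h_range: "h i \<in> {..<n} - L" if "i < n" for i
    using g that L unfolding h_def bij_betw_def by auto
  have y_nth: "y ! i = x ! h i" if "i < n" for i
    using that x_props by (simp add: y_def collide_along_def h_def)
  have y_eq_iff: "y ! i = y ! j \<longleftrightarrow> h i = h j" if "i < n" "j < n" for i j
    using that h_range x_props by (simp add: y_nth nth_eq_iff_index_eq)
  have fiber: "\<exists>k' \<in> L. {j. j < n \<and> h j = k} = {k, k'}" if k: "k \<in> {..<n} - L" for k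
  proof -
    obtain k' where k': "k' \<in> L" "g k' = k"
      using g k by (metis bij_betw_def imageE)
    have k'_unique: "j = k'" if "j \<in> L" "g j = k" for j
      using g k' that by (metis bij_betw_def inj_on_def)
    have "h j = k \<longleftrightarrow> j = k \<or> j = k'" for j
      using k k' k'_unique[of j] by (auto simp: h_def)
    then show ?thesis
      using k k' L by blast
  qed
  have "\<exists>!j. j < n \<and> j \<noteq> i \<and> y ! i = y ! j" if i: "i < n" for i
  proof -
    obtain k' where k': "k' \<in> L" and fib: "{j. j < n \<and> h j = h i} = {h i, k'}"
      using fiber h_range i by blast
    have "y ! i = y ! j \<longleftrightarrow> h j = h i" if "j < n" for j
      using y_eq_iff[OF i that] by auto
    then have "{j. j < n \<and> j \<noteq> i \<and> y ! i = y ! j} = {h i, k'} - {i}"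
      using fib by blast
    also have "\<dots> = {if i = k' then h i else k'}"
    proof -
      have "h i \<noteq> k'" "i \<in> {h i, k'}"
        using h_range i k' fib by blast+
      then show ?thesis by auto
    qed
    finally have "is_singleton {j. j < n \<and> j \<noteq> i \<and> y ! i = y ! j}"
      by simp
    then show ?thesis
      unfolding is_singleton_iff_ex1 by simp
  qed
  moreover have "set y \<subseteq> set x"
  proof
    fix a assume "a \<in> set y"
    then obtain i where "i < n" "a = y ! i"
      using x_props by (auto simp: y_def in_set_conv_nth)
    then show "a \<in> set x"
      using h_range x_props by (simp add: y_nth)
  qed
  ultimately show ?thesis
    using x_props by (auto simp: Col_neg_def y_def)
qed

definition collision_partner :: "'a list \<Rightarrow> nat" where
  "collision_partner x = (SOME j. j < length x \<and> j \<noteq> 0 \<and> x ! 0 = x ! j)"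

lemma collision_partner:
  assumes "x \<in> Col_neg n \<Sigma>" "0 < n"
  shows "collision_partner x < n" "collision_partner x \<noteq> 0"
    and "x ! 0 = x ! collision_partner x"
proof -
  have "length x = n" and "\<exists>j. j < n \<and> j \<noteq> 0 \<and> x ! 0 = x ! j"
    using assms unfolding Col_neg_def by blast+
  then have "collision_partner x < n \<and> collision_partner x \<noteq> 0 \<and> x ! 0 = x ! collision_partner x"
    unfolding collision_partner_def by (metis (mono_tags, lifting) someI_ex)
  then show "collision_partner x < n" "collision_partner x \<noteq> 0"
    and "x ! 0 = x ! collision_partner x"
    by auto
qed

definition collision_dist :: "nat \<Rightarrow> 'a list \<Rightarrow> nat \<Rightarrow> real" where
  "collision_dist n x i =
     (if distinct x then 1 / real n
      else if i = 0 \<or> i = collision_partner x then 1 / 2 else 0)"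

lemma collision_dist_prob_families:
  assumes "0 < n"
  shows "collision_dist n \<in> prob_families n (Col_dom n \<Sigma>)"
  unfolding prob_families_def
proof (intro CollectI ballI conjI allI impI)
  fix x i assume "i < n"
  show "0 \<le> collision_dist n x i" by (simp add: collision_dist_def)
next
  fix x assume x: "x \<in> Col_dom n \<Sigma>"
  show "(\<Sum>i<n. collision_dist n x i) = 1"
  proof (cases "distinct x")
    case True
    then show ?thesis using assms by (simp add: collision_dist_def)
  next
    case False
    then have "x \<in> Col_neg n \<Sigma>" using x by (auto simp: Col_dom_def Col_pos_def)
    then have j: "collision_partner x < n" "collision_partner x \<noteq> 0"
      using collision_partner assms by blast+
    have "(\<Sum>i<n. collision_dist n x i) = (\<Sum>i \<in> {0, collision_partner x}. collision_dist n x i)"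
      using j assms False by (intro sum.mono_neutral_right) (auto simp: collision_dist_def)
    also have "\<dots> = 1" using j False by (simp add: collision_dist_def)
    finally show ?thesis .
  qed
qed

lemma pi_term_collision_dist_le:
  assumes a: "a \<in> Col_pos n \<Sigma>" and b: "b \<in> Col_neg n \<Sigma>" and "0 < n"
  shows "pi_term n (collision_dist n) a b \<le> ereal (sqrt (2 * real n))"
proof -
  let ?j = "collision_partner b"
  have "distinct a" "length a = n" using a by (auto simp: Col_pos_def)
  moreover have "\<not> distinct b" using Col_neg_not_distinct b assms(3) by blast
  moreover note j = collision_partner[OF b assms(3)]
  ultimately obtain k where k: "k < n" "a ! k \<noteq> b ! k" "k = 0 \<or> k = ?j"
    using assms(3) by (metis nth_eq_iff_index_eq)
  have "1 / (2 * real n) \<le> collision_dist n a k * collision_dist n b k"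
    using k \<open>distinct a\<close> \<open>\<not> distinct b\<close> by (auto simp: collision_dist_def)
  then have "pi_term n (collision_dist n) a b \<le> ereal (1 / sqrt (1 / (2 * real n)))"
    using k assms(3) by (intro pi_term_upper_bound) auto
  then show ?thesis by (simp add: real_sqrt_divide)
qed

lemma maxPI_Col_le:
  assumes "0 < n"
  shows "maxPI n (Col_dom n \<Sigma>) Col \<le> ereal (sqrt (2 * real n))"
proof -
  have "maxPI_of n (Col_dom n \<Sigma>) Col (collision_dist n) \<le> ereal (sqrt (2 * real n))"
  proof (rule maxPI_of_le)
    fix x y assume "x \<in> Col_dom n \<Sigma>" "y \<in> Col_dom n \<Sigma>" "Col x \<noteq> Col y"
    then consider "x \<in> Col_pos n \<Sigma>" "y \<in> Col_neg n \<Sigma>" | "y \<in> Col_pos n \<Sigma>" "x \<in> Col_neg n \<Sigma>"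
      using Col_neg_not_distinct assms by (auto simp: Col_dom_def Col_pos_def Col_def)
    then show "pi_term n (collision_dist n) x y \<le> ereal (sqrt (2 * real n))"
      using pi_term_collision_dist_le assms pi_term_commute by metis
  qed
  then show ?thesis
    unfolding maxPI_eq_INF_maxPI_of
    using collision_dist_prob_families[OF assms] by (meson INF_lower2)
qed

lemma card_light_positions:
  assumes p: "p \<in> prob_families n S" and "x \<in> S" "0 < n"
  shows "n div 2 \<le> card {i. i < n \<and> p x i \<le> 2 / real n}"
proof -
  define H where "H = {i \<in> {..<n}. 2 / real n < p x i}"
  have "\<forall>i<n. 0 \<le> p x i" "(\<Sum>i<n. p x i) = 1"
    using p \<open>x \<in> S\<close> by (auto simp: prob_families_def)
  moreover have "real (card H) * (2 / real n) \<le> (\<Sum>i<n. p x i)"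
    unfolding H_def by (rule card_gt_mult_le_sum) (use calculation in auto)
  ultimately have "real (card H) * (2 / real n) \<le> 1"
    by simp
  then have "2 * card H \<le> n"
    using \<open>0 < n\<close> by (simp add: field_simps)
  moreover have "{i. i < n \<and> p x i \<le> 2 / real n} = {..<n} - H"
    by (auto simp: H_def)
  moreover have "card ({..<n} - H) = n - card H"
    by (subst card_Diff_subset) (auto simp: H_def)
  ultimately show ?thesis by simp
qed

lemma obtain_Col_pair_pi_term_ge:
  assumes p: "p \<in> prob_families n (Col_dom n \<Sigma>)" and "even n" "0 < n" "n \<le> card \<Sigma>"
  obtains x y where "x \<in> Col_pos n \<Sigma>" "y \<in> Col_neg n \<Sigma>"
    and "ereal (sqrt (real n / 2)) \<le> pi_term n p x y"
proof -
  obtain x where x: "x \<in> Col_pos n \<Sigma>"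
    using obtain_Col_pos assms(4) by blast
  then have "x \<in> Col_dom n \<Sigma>" by (simp add: Col_dom_def)
  let ?light = "{i. i < n \<and> p x i \<le> 2 / real n}"
  obtain L g where L: "L \<subseteq> ?light" and g: "bij_betw g L ({..<n} - L)"
    using obtain_half_matching[of n ?light] card_light_positions[OF p \<open>x \<in> Col_dom n \<Sigma>\<close>]
      \<open>even n\<close> \<open>0 < n\<close> by blast
  define y where "y = collide_along x L g"
  have y: "y \<in> Col_neg n \<Sigma>"
    unfolding y_def using collide_along_Col_neg x L g by blast
  then have "y \<in> Col_dom n \<Sigma>" by (simp add: Col_dom_def)
  have lx: "length x = n" "distinct x" using x by (auto simp: Col_pos_def)
  have differ_in_L: "i \<in> L" if "i < n" "x ! i \<noteq> y ! i" for i
    using that lx nth_collide_along_notin by (metis y_def)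
  have "x \<noteq> y"
    using lx Col_neg_not_distinct[OF y \<open>0 < n\<close>] by blast
  moreover have "length y = n"
    using lx by (simp add: y_def)
  ultimately have "\<exists>i<n. x ! i \<noteq> y ! i"
    using lx nth_equalityI by metis
  moreover have "0 \<le> p x i * p y i \<and> p x i * p y i \<le> 2 / real n"
    if i: "i < n" "x ! i \<noteq> y ! i" for i
  proof -
    have "p x i \<le> 2 / real n"
      using differ_in_L[OF i] L by blast
    moreover have "0 \<le> p x i" "0 \<le> p y i" "p y i \<le> 1"
      using prob_families_bounds p \<open>x \<in> Col_dom n \<Sigma>\<close> \<open>y \<in> Col_dom n \<Sigma>\<close> i by blast+
    ultimately have "p x i * p y i \<le> 2 / real n * 1"
      by (intro mult_mono') auto
    then show ?thesis
      using \<open>0 \<le> p x i\<close> \<open>0 \<le> p y i\<close> by simp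
  qed
  ultimately have "ereal (1 / sqrt (2 / real n)) \<le> pi_term n p x y"
    using \<open>0 < n\<close> by (intro pi_term_lower_bound) auto
  then show thesis
    using that x y by (simp add: real_sqrt_divide)
qed

lemma maxPI_Col_ge:
  assumes "even n" "0 < n" "n \<le> card \<Sigma>"
  shows "ereal (sqrt (real n / 2)) \<le> maxPI n (Col_dom n \<Sigma>) Col"
  unfolding maxPI_eq_INF_maxPI_of
proof (rule INF_greatest)
  fix p assume "p \<in> prob_families n (Col_dom n \<Sigma>)"
  then obtain x y where "x \<in> Col_pos n \<Sigma>" "y \<in> Col_neg n \<Sigma>"
    and bound: "ereal (sqrt (real n / 2)) \<le> pi_term n p x y"
    using obtain_Col_pair_pi_term_ge assms by blast
  have "pi_term n p x y \<le> maxPI_of n (Col_dom n \<Sigma>) Col p"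
  proof (rule pi_term_le_maxPI_of)
    show "x \<in> Col_dom n \<Sigma>" "y \<in> Col_dom n \<Sigma>"
      using \<open>x \<in> Col_pos n \<Sigma>\<close> \<open>y \<in> Col_neg n \<Sigma>\<close> by (simp_all add: Col_dom_def)
    show "Col x \<noteq> Col y"
      using \<open>x \<in> Col_pos n \<Sigma>\<close> Col_neg_not_distinct[OF \<open>y \<in> Col_neg n \<Sigma>\<close> \<open>0 < n\<close>]
      by (simp add: Col_def Col_pos_def)
  qed
  with bound show "ereal (sqrt (real n / 2)) \<le> maxPI_of n (Col_dom n \<Sigma>) Col p"
    by (rule order_trans)
qed

theorem mainTheorem19:
  shows "\<exists>c1 c2 :: real. c1 > 0 \<and> c2 > 0 \<and>
    (\<forall>(n::nat) (\<Sigma>::nat set). even n \<and> n \<ge> 2 \<and> finite \<Sigma> \<and> card \<Sigma> \<ge> n \<longrightarrow>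
       ereal (c1 * sqrt (real n)) \<le> maxPI n (Col_dom n \<Sigma>) Col \<and>
       maxPI n (Col_dom n \<Sigma>) Col \<le> ereal (c2 * sqrt (real n)))"
proof (rule exI[of _ "1 / sqrt 2"], rule exI[of _ "sqrt 2"], intro conjI allI impI)
  fix n :: nat and \<Sigma> :: "nat set"
  assume "even n \<and> n \<ge> 2 \<and> finite \<Sigma> \<and> card \<Sigma> \<ge> n"
  then have n: "even n" "0 < n" "n \<le> card \<Sigma>" by auto
  show "ereal (1 / sqrt 2 * sqrt (real n)) \<le> maxPI n (Col_dom n \<Sigma>) Col"
    using maxPI_Col_ge[OF n] by (simp add: real_sqrt_divide)
  show "maxPI n (Col_dom n \<Sigma>) Col \<le> ereal (sqrt 2 * sqrt (real n))"
    using maxPI_Col_le[OF n(2)] by (simp add: real_sqrt_mult)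
qed simp_all

end
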